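(* Let $A=(a_{kl})$ be an $n\times n$ matrix with entries in $\{0,1,2,\dots\}\cup\{\infty\}$ and no zeros on the diagonal. Let $i\neq j$ be indices with $a_{ji}\neq 0$. Let $A'$ be obtained from $A$ by replacing column $i$ with $(a_{1i}+a_{1j},\dots,a_{ni}+a_{nj})^T$ and then subtracting $1$ from the $(j,i)$ entry, so that the new $(j,i)$ entry is $a_{ji}+a_{jj}-1$. All other columns are unchanged. Then $A\sim_M A'$. Moreover: - $A'$ has no zeros on the diagonal; - if $A$ is irreducible, so is $A'$; - if the top-left $m\times m$ corner of $A$ is irreducible, so is the top-left $m\times m$ corner of $A'$.
   Context: Arithmetic conventions: $\infty+a=\infty$ and $\infty-1=\infty$. For a finite index set $X$ and an $X\times X$ matrix $A$ with entries in $\{0,1,2,\dots\}\cup\{\infty\}$, $G_A$ is the graph with vertex set $X$ and exactly $A(x,y)$ edges from $x$ to $y$. A matrix $A$ is irreducible if $G_A$ is strongly connected. For matrices, $A\sim_M B$ means $G_A\sim_M G_B$. A graph $G=(G^0,G^1,r,s)$ may have multiple edges and loops. A source receives no edges, a sink emits no edges, and an infinite emitter emits infinitely many edges. A vertex is singular if it is a sink or infinite emitter, and regular otherwise. Move-equivalence $\sim_M$ is the smallest equivalence relation on graphs with finitely many vertices such that $G\sim_M E$ whenever $E$ is isomorphic to a graph obtained from $G$ by one of the following moves. (S) Delete a regular source together with the edges it emits. (R) For a regular vertex $u$ emitting exactly one edge $f$, with $r(f)\neq u$, and all of whose incoming edges have the same source $v$: delete $u$, $f$ and the edges into $u$, and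 add for each $e\in r^{-1}(u)$ an edge $[ef]$ from $v$ to $r(f)$. (O) Out-splitting at a non-sink $v$ along a partition $\mathcal E_1,\dots,\mathcal E_n$ of $s^{-1}(v)$ with at most one infinite part. Replace $v$ by $v^1,\dots,v^n$. Each edge $e$ into $v$ becomes copies $e^1,\dots,e^n$ with $r(e^i)=v^i$ and source $s(e)$, or source $v^j$ if $s(e)=v$ and $e\in\mathcal E_j$. An edge from $v$ to $w\neq v$ lying in $\mathcal E_i$ gets source $v^i$. (I) In-splitting at a regular non-source $v$ along a partition $\mathcal E_1,\dots,\mathcal E_n$ of $r^{-1}(v)$. Replace $v$ by $v^1,\dots,v^n$. Each edge $e$ out of $v$ becomes copies $e^1,\dots,e^n$ with $s(e^i)=v^i$ and range $r(e)$, or range $v^j$ if $r(e)=v$ and $e\in\mathcal E_j$. An edge into $v$ from $w\neq v$ lying in $\mathcal E_i$ gets range $v^i$. *)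

theory Defs
  imports Main "HOL-Library.Extended_Nat"
begin

record ('v, 'e) graph =
  verts :: "'v set"
  edges :: "'e set"
  rng   :: "'e \<Rightarrow> 'v"
  src   :: "'e \<Rightarrow> 'v"

definition wf_graph :: "('v, 'e) graph \<Rightarrow> bool" where
  "wf_graph G \<longleftrightarrow> finite (verts G) \<and>
     (\<forall>e\<in>edges G. rng G e \<in> verts G \<and> src G e \<in> verts G)"

definition emits :: "('v, 'e) graph \<Rightarrow> 'v \<Rightarrow> 'e set" where
  "emits G v = {e \<in> edges G. src G e = v}"

definition receives :: "('v, 'e) graph \<Rightarrow> 'v \<Rightarrow> 'e set" where
  "receives G v = {e \<in> edges G. rng G e = v}"

definition is_source :: "('v, 'e) graph \<Rightarrow> 'v \<Rightarrow> bool" where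
  "is_source G v \<longleftrightarrow> receives G v = {}"

definition is_sink :: "('v, 'e) graph \<Rightarrow> 'v \<Rightarrow> bool" where
  "is_sink G v \<longleftrightarrow> emits G v = {}"

definition is_regular :: "('v, 'e) graph \<Rightarrow> 'v \<Rightarrow> bool" where
  "is_regular G v \<longleftrightarrow> v \<in> verts G \<and> emits G v \<noteq> {} \<and> finite (emits G v)"

definition graph_iso :: "('v, 'e) graph \<Rightarrow> ('w, 'f) graph \<Rightarrow> bool" where
  "graph_iso G H \<longleftrightarrow> (\<exists>\<phi> \<psi>. bij_betw \<phi> (verts G) (verts H) \<and> bij_betw \<psi> (edges G) (edges H) \<and>
      (\<forall>e\<in>edges G. rng H (\<psi> e) = \<phi> (rng G e) \<and> src H (\<psi> e) = \<phi> (src G e)))"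

definition move_S_ok :: "('v, 'e) graph \<Rightarrow> 'v \<Rightarrow> bool" where
  "move_S_ok G u \<longleftrightarrow> is_regular G u \<and> is_source G u"

definition move_S :: "('v, 'e) graph \<Rightarrow> 'v \<Rightarrow> ('v, 'e) graph" where
  "move_S G u = \<lparr>verts = verts G - {u}, edges = edges G - emits G u,
                  rng = rng G, src = src G\<rparr>"

definition move_R_ok :: "('v, 'e) graph \<Rightarrow> 'v \<Rightarrow> 'e \<Rightarrow> 'v \<Rightarrow> bool" where
  "move_R_ok G u f v \<longleftrightarrow> is_regular G u \<and> emits G u = {f} \<and> rng G f \<noteq> u \<and>
     v \<in> verts G \<and> (\<forall>e\<in>receives G u. src G e = v)"

(* old edges are tagged Inl; the new edge [ef] for e into u is Inr e *)
definition move_R :: "('v, 'e) graph \<Rightarrow> 'v \<Rightarrow> 'e \<Rightarrow> 'v \<Rightarrow> ('v, 'e + 'e) graph" where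
  "move_R G u f v = \<lparr>verts = verts G - {u},
     edges = Inl ` (edges G - {f} - receives G u) \<union> Inr ` receives G u,
     rng = (\<lambda>x. case x of Inl e \<Rightarrow> rng G e | Inr e \<Rightarrow> rng G f),
     src = (\<lambda>x. case x of Inl e \<Rightarrow> src G e | Inr e \<Rightarrow> v)\<rparr>"

definition is_partition :: "'e set \<Rightarrow> nat \<Rightarrow> ('e \<Rightarrow> nat) \<Rightarrow> bool" where
  "is_partition S n p \<longleftrightarrow> 1 \<le> n \<and> (\<forall>e\<in>S. p e < n) \<and> (\<forall>i<n. {e\<in>S. p e = i} \<noteq> {})"

(* (O): out-splitting; the old vertex w \<noteq> v becomes (w,0), v becomes v^i = (v,i);
   an edge e not into v becomes (e,0), an edge e into v has copies (e,i), i<n *)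
definition move_O_ok :: "('v, 'e) graph \<Rightarrow> 'v \<Rightarrow> nat \<Rightarrow> ('e \<Rightarrow> nat) \<Rightarrow> bool" where
  "move_O_ok G v n p \<longleftrightarrow> v \<in> verts G \<and> \<not> is_sink G v \<and> is_partition (emits G v) n p \<and>
     (\<forall>i<n. \<forall>j<n. infinite {e\<in>emits G v. p e = i} \<and> infinite {e\<in>emits G v. p e = j} \<longrightarrow> i = j)"

definition move_O :: "('v, 'e) graph \<Rightarrow> 'v \<Rightarrow> nat \<Rightarrow> ('e \<Rightarrow> nat) \<Rightarrow> ('v \<times> nat, 'e \<times> nat) graph" where
  "move_O G v n p = \<lparr>verts = (\<lambda>w. (w, 0)) ` (verts G - {v}) \<union> {(v, i) | i. i < n},
     edges = {(e, 0) | e. e \<in> edges G \<and> rng G e \<noteq> v} \<union> {(e, i) | e i. e \<in> edges G \<and> rng G e = v \<and> i < n},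
     rng = (\<lambda>(e, i). if rng G e = v then (v, i) else (rng G e, 0)),
     src = (\<lambda>(e, i). if src G e = v then (v, p e) else (src G e, 0))\<rparr>"

definition move_I_ok :: "('v, 'e) graph \<Rightarrow> 'v \<Rightarrow> nat \<Rightarrow> ('e \<Rightarrow> nat) \<Rightarrow> bool" where
  "move_I_ok G v n p \<longleftrightarrow> is_regular G v \<and> \<not> is_source G v \<and> is_partition (receives G v) n p"

definition move_I :: "('v, 'e) graph \<Rightarrow> 'v \<Rightarrow> nat \<Rightarrow> ('e \<Rightarrow> nat) \<Rightarrow> ('v \<times> nat, 'e \<times> nat) graph" where
  "move_I G v n p = \<lparr>verts = (\<lambda>w. (w, 0)) ` (verts G - {v}) \<union> {(v, i) | i. i < n},
     edges = {(e, 0) | e. e \<in> edges G \<and> src G e \<noteq> v} \<union> {(e, i) | e i. e \<in> edges G \<and> src G e = v \<and> i < n},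
     rng = (\<lambda>(e, i). if rng G e = v then (v, p e) else (rng G e, 0)),
     src = (\<lambda>(e, i). if src G e = v then (v, i) else (src G e, 0))\<rparr>"

type_synonym ugraph = "(nat, nat) graph"

definition move_step :: "ugraph \<Rightarrow> ugraph \<Rightarrow> bool" where
  "move_step G E \<longleftrightarrow> wf_graph G \<and> wf_graph E \<and>
    ((\<exists>u. move_S_ok G u \<and> graph_iso (move_S G u) E) \<or>
     (\<exists>u f v. move_R_ok G u f v \<and> graph_iso (move_R G u f v) E) \<or>
     (\<exists>v n p. move_O_ok G v n p \<and> graph_iso (move_O G v n p) E) \<or>
     (\<exists>v n p. move_I_ok G v n p \<and> graph_iso (move_I G v n p) E))"

definition move_equiv :: "ugraph \<Rightarrow> ugraph \<Rightarrow> bool" where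
  "move_equiv = (sup move_step move_step\<inverse>\<inverse>)\<^sup>*\<^sup>*"

(* an n\<times>n matrix over {0,1,2,...,\<infinity>} indexed by {..<n}; entries outside are ignored *)
definition matrix_graph :: "nat \<Rightarrow> (nat \<Rightarrow> nat \<Rightarrow> enat) \<Rightarrow> (nat, nat \<times> nat \<times> nat) graph" where
  "matrix_graph n A = \<lparr>verts = {..<n},
     edges = {(x, y, k). x < n \<and> y < n \<and> enat k < A x y},
     rng = (\<lambda>(x, y, k). y), src = (\<lambda>(x, y, k). x)\<rparr>"

definition mat_move_equiv :: "nat \<Rightarrow> (nat \<Rightarrow> nat \<Rightarrow> enat) \<Rightarrow> (nat \<Rightarrow> nat \<Rightarrow> enat) \<Rightarrow> bool" where
  "mat_move_equiv n A B \<longleftrightarrow> (\<exists>G E. wf_graph G \<and> wf_graph E \<and>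
      graph_iso (matrix_graph n A) G \<and> graph_iso (matrix_graph n B) E \<and> move_equiv G E)"

definition strongly_connected :: "('v, 'e) graph \<Rightarrow> bool" where
  "strongly_connected G \<longleftrightarrow> (\<forall>x\<in>verts G. \<forall>y\<in>verts G.
      (\<lambda>a b. \<exists>e\<in>edges G. src G e = a \<and> rng G e = b)\<^sup>*\<^sup>* x y)"

definition irreducible_mat :: "nat \<Rightarrow> (nat \<Rightarrow> nat \<Rightarrow> enat) \<Rightarrow> bool" where
  "irreducible_mat n A \<longleftrightarrow> strongly_connected (matrix_graph n A)"

definition col_op :: "(nat \<Rightarrow> nat \<Rightarrow> enat) \<Rightarrow> nat \<Rightarrow> nat \<Rightarrow> (nat \<Rightarrow> nat \<Rightarrow> enat)" where
  "col_op A i j = (\<lambda>k l. if l = i then (if k = j then A k i + A k j - 1 else A k i + A k j) else A k l)"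

end

theory Submission
  imports Defs "HOL-Library.Countable_Set"
begin

text \<open>Out-split the graph of A at j, putting the single edge (j,i,0) into a part of its own. The copy j' of j
  carrying that part emits only this edge to i and receives a copy of every edge into j: in matrix
  terms a new vertex appears whose row is the unit vector at i and whose column is column j of A,
  and a_ji drops by one. The new vertex is then eliminated. While it has several predecessors, an
  in-splitting separates the edges coming from one predecessor x, and move (R) collapses the copy
  that receives edges only from x, adding those edges to entry (x,i). After the last predecessor
  column j of A has been added to column i. No entry decreases, because a_jj \<ge> 1 compensates the
  subtraction, so irreducible corners stay irreducible.\<close>

section \<open>Cardinalities in the extended naturals\<close>

definition ecard :: "'a set \<Rightarrow> enat" where
  "ecard S = (if finite S then enat (card S) else \<infinity>)"

lemma ecard_image: "inj_on h S \<Longrightarrow> ecard (h ` S) = ecard S"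
  by (auto simp: ecard_def finite_image_iff card_image)

lemma ecard_Un_disjoint: "S \<inter> T = {} \<Longrightarrow> ecard (S \<union> T) = ecard S + ecard T"
  by (auto simp: ecard_def card_Un_disjoint)

lemma ecard_empty [simp]: "ecard {} = 0"
  by (simp add: ecard_def zero_enat_def)

lemma ecard_singleton [simp]: "ecard {x} = 1"
  by (simp add: ecard_def one_enat_def)

lemma ecard_less_enat: "ecard {c. enat c < a} = a"
proof (cases a)
  case (enat k)
  then have "{c. enat c < a} = {..<k}" by auto
  then show ?thesis using enat by (simp add: ecard_def)
next
  case infinity
  then have "{c. enat c < a} = UNIV" by auto
  then show ?thesis using infinity by (simp add: ecard_def)
qed

lemma ecard_pos_less_enat: "ecard {c. 0 < c \<and> enat c < a} = a - 1"
proof -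
  have "{c. 0 < c \<and> enat c < a} = Suc ` {c. enat c < a - 1}"
  proof (cases a)
    case (enat k)
    then show ?thesis
      by (auto simp: one_enat_def image_iff gr0_conv_Suc)
  next
    case infinity
    then show ?thesis
      by (auto simp: image_iff gr0_conv_Suc)
  qed
  then show ?thesis by (simp add: ecard_image ecard_less_enat)
qed

lemma ecard_inj_image_less_enat: "inj g \<Longrightarrow> ecard (g ` {c. enat c < a}) = a"
  by (metis ecard_image ecard_less_enat inj_on_subset subset_UNIV)

lemma ecard_inj_image_pos_less_enat: "inj g \<Longrightarrow> ecard (g ` {c. 0 < c \<and> enat c < a}) = a - 1"
  by (metis ecard_image ecard_pos_less_enat inj_on_subset subset_UNIV)

lemma ecard_eq_imp_bij_betw:
  fixes S :: "'a::countable set" and T :: "'b::countable set"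
  assumes "ecard S = ecard T"
  obtains g where "bij_betw g S T"
proof (cases "finite S")
  case True
  then have "finite T" "card S = card T" using assms by (auto simp: ecard_def split: if_splits)
  then show ?thesis using True finite_same_card_bij that by blast
next
  case False
  then have "infinite T" using assms by (auto simp: ecard_def split: if_splits)
  have "bij_betw (from_nat_into S) UNIV S" "bij_betw (from_nat_into T) UNIV T"
    using False \<open>infinite T\<close> by (simp_all add: bij_betw_from_nat_into)
  then have "bij_betw (from_nat_into T \<circ> inv_into UNIV (from_nat_into S)) S T"
    using bij_betw_inv_into bij_betw_trans by blast
  then show ?thesis using that by blast
qed

lemma enat_minus_one_add: "(x::enat) \<noteq> 0 \<Longrightarrow> (x - 1) + y = x + y - 1"
  by (cases x; cases y) (auto simp: one_enat_def zero_enat_def)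

lemma enat_le_add_minus_one: "(y::enat) \<noteq> 0 \<Longrightarrow> x \<le> x + y - 1"
  by (cases x; cases y) (auto simp: one_enat_def zero_enat_def)

section \<open>Graph isomorphism\<close>

lemma graph_iso_injI:
  assumes "inj \<Phi>" "inj \<Psi>" "\<Phi> ` verts G = verts H" "\<Psi> ` edges G = edges H"
    "\<And>e. e \<in> edges G \<Longrightarrow> rng H (\<Psi> e) = \<Phi> (rng G e) \<and> src H (\<Psi> e) = \<Phi> (src G e)"
  shows "graph_iso G H"
  unfolding graph_iso_def bij_betw_def using assms by (metis inj_on_subset subset_UNIV)

lemma graph_iso_trans:
  assumes "graph_iso G H" "graph_iso H K"
  shows "graph_iso G K"
proof -
  obtain \<phi> \<psi> where GH: "bij_betw \<phi> (verts G) (verts H)" "bij_betw \<psi> (edges G) (edges H)"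
    "\<forall>e\<in>edges G. rng H (\<psi> e) = \<phi> (rng G e) \<and> src H (\<psi> e) = \<phi> (src G e)"
    using assms(1) unfolding graph_iso_def by blast
  obtain \<phi>' \<psi>' where HK: "bij_betw \<phi>' (verts H) (verts K)" "bij_betw \<psi>' (edges H) (edges K)"
    "\<forall>e\<in>edges H. rng K (\<psi>' e) = \<phi>' (rng H e) \<and> src K (\<psi>' e) = \<phi>' (src H e)"
    using assms(2) unfolding graph_iso_def by blast
  have "\<psi> e \<in> edges H" if "e \<in> edges G" for e
    using GH(2) that bij_betw_apply by metis
  then have "\<forall>e\<in>edges G. rng K ((\<psi>' \<circ> \<psi>) e) = (\<phi>' \<circ> \<phi>) (rng G e) \<and>
      src K ((\<psi>' \<circ> \<psi>) e) = (\<phi>' \<circ> \<phi>) (src G e)"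
    using GH(3) HK(3) by auto
  moreover have "bij_betw (\<phi>' \<circ> \<phi>) (verts G) (verts K)" "bij_betw (\<psi>' \<circ> \<psi>) (edges G) (edges K)"
    using GH HK bij_betw_trans by blast+
  ultimately show ?thesis unfolding graph_iso_def by blast
qed

lemma graph_iso_sym:
  assumes "graph_iso G H" "wf_graph G"
  shows "graph_iso H G"
proof -
  obtain \<phi> \<psi> where GH: "bij_betw \<phi> (verts G) (verts H)" "bij_betw \<psi> (edges G) (edges H)"
    "\<forall>e\<in>edges G. rng H (\<psi> e) = \<phi> (rng G e) \<and> src H (\<psi> e) = \<phi> (src G e)"
    using assms(1) unfolding graph_iso_def by blast
  let ?\<phi> = "inv_into (verts G) \<phi>" and ?\<psi> = "inv_into (edges G) \<psi>"
  have "rng G (?\<psi> e) = ?\<phi> (rng H e) \<and> src G (?\<psi> e) = ?\<phi> (src H e)" if e: "e \<in> edges H" for e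
  proof -
    have \<psi>: "?\<psi> e \<in> edges G" "\<psi> (?\<psi> e) = e"
      using GH(2) e by (auto simp: bij_betw_def inv_into_into f_inv_into_f)
    then have "rng G (?\<psi> e) \<in> verts G" "src G (?\<psi> e) \<in> verts G"
      using assms(2) unfolding wf_graph_def by auto
    then show ?thesis using GH(1,3) \<psi> by (metis bij_betw_inv_into_left)
  qed
  moreover have "bij_betw ?\<phi> (verts H) (verts G)" "bij_betw ?\<psi> (edges H) (edges G)"
    using GH bij_betw_inv_into by blast+
  ultimately show ?thesis unfolding graph_iso_def by blast
qed

lemma wf_graph_iso:
  assumes "wf_graph G" "graph_iso G H"
  shows "wf_graph H"
proof -
  obtain \<phi> \<psi> where GH: "bij_betw \<phi> (verts G) (verts H)" "bij_betw \<psi> (edges G) (edges H)"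
    "\<forall>e\<in>edges G. rng H (\<psi> e) = \<phi> (rng G e) \<and> src H (\<psi> e) = \<phi> (src G e)"
    using assms(2) unfolding graph_iso_def by blast
  have "rng H f \<in> verts H \<and> src H f \<in> verts H" if "f \<in> edges H" for f
  proof -
    obtain e where e: "e \<in> edges G" "f = \<psi> e" using GH(2) \<open>f \<in> edges H\<close> unfolding bij_betw_def by auto
    then have "rng G e \<in> verts G" "src G e \<in> verts G" using assms(1) unfolding wf_graph_def by auto
    then show ?thesis using GH(1,3) e by (metis bij_betw_apply)
  qed
  moreover have "finite (verts H)"
    using assms(1) GH(1) unfolding wf_graph_def bij_betw_def by (metis finite_imageI)
  ultimately show ?thesis unfolding wf_graph_def by auto
qed

lemma graph_iso_by_edge_counts:
  fixes G :: "('v, 'e::countable) graph" and H :: "('w, 'f::countable) graph"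
  assumes wfG: "wf_graph G" and wfH: "wf_graph H"
    and \<phi>: "bij_betw \<phi> (verts G) (verts H)"
    and counts: "\<And>a b. a \<in> verts H \<Longrightarrow> b \<in> verts H \<Longrightarrow>
       ecard {e\<in>edges G. \<phi> (src G e) = a \<and> \<phi> (rng G e) = b} = ecard {e\<in>edges H. src H e = a \<and> rng H e = b}"
  shows "graph_iso G H"
proof -
  define P where "P a b = {e\<in>edges G. \<phi> (src G e) = a \<and> \<phi> (rng G e) = b}" for a b
  define Q where "Q a b = {e\<in>edges H. src H e = a \<and> rng H e = b}" for a b
  have "\<exists>g. bij_betw g (P a b) (Q a b)" if "a \<in> verts H" "b \<in> verts H" for a b
    using ecard_eq_imp_bij_betw[OF counts[OF that]] unfolding P_def Q_def by blast
  then obtain g where g: "\<And>a b. a \<in> verts H \<Longrightarrow> b \<in> verts H \<Longrightarrow> bij_betw (g a b) (P a b) (Q a b)"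
    by metis
  define \<psi> where "\<psi> e = g (\<phi> (src G e)) (\<phi> (rng G e)) e" for e
  have ends: "\<phi> (src G e) \<in> verts H" "\<phi> (rng G e) \<in> verts H" if "e \<in> edges G" for e
    using that wfG \<phi> unfolding wf_graph_def bij_betw_def by auto
  have P: "e \<in> P (\<phi> (src G e)) (\<phi> (rng G e))" if "e \<in> edges G" for e
    using that unfolding P_def by auto
  have Q: "\<psi> e \<in> Q (\<phi> (src G e)) (\<phi> (rng G e))" if "e \<in> edges G" for e
    using g[OF ends[OF that]] P[OF that] unfolding \<psi>_def bij_betw_def by auto
  have "inj_on \<psi> (edges G)"
  proof (rule inj_onI)
    fix x y assume x: "x \<in> edges G" and y: "y \<in> edges G" and eq: "\<psi> x = \<psi> y"
    then have same_ends: "\<phi> (src G x) = \<phi> (src G y) \<and> \<phi> (rng G x) = \<phi> (rng G y)"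
      using Q[OF x] Q[OF y] unfolding Q_def by auto
    then have "\<psi> y = g (\<phi> (src G x)) (\<phi> (rng G x)) y" "y \<in> P (\<phi> (src G x)) (\<phi> (rng G x))"
      using P[OF y] unfolding \<psi>_def by simp_all
    then show "x = y"
      using g[OF ends[OF x]] P[OF x] eq unfolding \<psi>_def bij_betw_def inj_on_def by metis
  qed
  moreover have "edges H \<subseteq> \<psi> ` edges G"
  proof
    fix f assume f: "f \<in> edges H"
    let ?a = "src H f" and ?b = "rng H f"
    have ab: "?a \<in> verts H" "?b \<in> verts H" using f wfH unfolding wf_graph_def by auto
    have "f \<in> Q ?a ?b" using f unfolding Q_def by auto
    then have "f \<in> g ?a ?b ` P ?a ?b" using bij_betw_imp_surj_on[OF g[OF ab]] by simp
    then obtain e where "f = g ?a ?b e" "e \<in> P ?a ?b" by (rule imageE)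
    then have "\<psi> e = f" "e \<in> edges G" unfolding \<psi>_def P_def by auto
    then show "f \<in> \<psi> ` edges G" by blast
  qed
  moreover have "\<psi> ` edges G \<subseteq> edges H" "\<forall>e\<in>edges G. rng H (\<psi> e) = \<phi> (rng G e) \<and> src H (\<psi> e) = \<phi> (src G e)"
    using Q unfolding Q_def by auto
  ultimately show ?thesis using \<phi> unfolding graph_iso_def bij_betw_def by blast
qed

section \<open>Moves on countable graphs\<close>

text \<open>Move equivalence lives on graphs over the natural numbers, whereas the moves produce graphs
  over pairs; both are transported along the injection to_nat.\<close>

definition to_ugraph :: "('v::countable, 'e::countable) graph \<Rightarrow> ugraph" where
  "to_ugraph H = \<lparr>verts = to_nat ` verts H, edges = to_nat ` edges H,
     rng = (\<lambda>e. to_nat (rng H (from_nat e))), src = (\<lambda>e. to_nat (src H (from_nat e)))\<rparr>"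

lemma to_ugraph_simps [simp]:
  "verts (to_ugraph H) = to_nat ` verts H" "edges (to_ugraph H) = to_nat ` edges H"
  "rng (to_ugraph H) (to_nat e) = to_nat (rng H e)" "src (to_ugraph H) (to_nat e) = to_nat (src H e)"
  by (auto simp: to_ugraph_def)

lemma graph_iso_to_ugraph: "graph_iso H (to_ugraph H)"
  by (rule graph_iso_injI[where \<Phi> = to_nat and \<Psi> = to_nat]) auto

lemma wf_graph_to_ugraph: "wf_graph H \<Longrightarrow> wf_graph (to_ugraph H)"
  using wf_graph_iso graph_iso_to_ugraph by blast

lemma emits_to_ugraph: "emits (to_ugraph H) (to_nat v) = to_nat ` emits H v"
  by (auto simp: emits_def)

lemma receives_to_ugraph: "receives (to_ugraph H) (to_nat v) = to_nat ` receives H v"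
  by (auto simp: receives_def)

lemma to_nat_image_part: "{e \<in> to_nat ` S. p (from_nat e) = i} = to_nat ` {e\<in>S. p e = i}"
  by auto

lemma is_partition_to_nat_image: "is_partition S n p \<Longrightarrow> is_partition (to_nat ` S) n (p \<circ> from_nat)"
  unfolding is_partition_def by (auto simp: to_nat_image_part)

lemma is_regular_to_ugraph: "is_regular H v \<Longrightarrow> is_regular (to_ugraph H) (to_nat v)"
  unfolding is_regular_def emits_to_ugraph by (auto simp: finite_image_iff)

lemma move_O_ok_to_ugraph:
  "move_O_ok H v n p \<Longrightarrow> move_O_ok (to_ugraph H) (to_nat v) n (p \<circ> from_nat)"
  unfolding move_O_ok_def is_sink_def emits_to_ugraph
  by (auto simp: is_partition_to_nat_image to_nat_image_part finite_image_iff)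

lemma move_I_ok_to_ugraph:
  "move_I_ok H v n p \<Longrightarrow> move_I_ok (to_ugraph H) (to_nat v) n (p \<circ> from_nat)"
  unfolding move_I_ok_def is_source_def receives_to_ugraph
  by (auto simp: is_partition_to_nat_image is_regular_to_ugraph)

lemma move_R_ok_to_ugraph:
  "move_R_ok H u f v \<Longrightarrow> move_R_ok (to_ugraph H) (to_nat u) (to_nat f) (to_nat v)"
  unfolding move_R_ok_def receives_to_ugraph
  by (auto simp: is_regular_to_ugraph emits_to_ugraph)

lemma Collect_Pair_less: "{(v, i) |i. i < (n::nat)} = Pair v ` {..<n}"
  by auto

lemma to_nat_image_diff: "to_nat ` (A - B) = to_nat ` A - to_nat ` B"
  by (rule image_set_diff) simp

lemma to_nat_image_diff_singleton: "to_nat ` A - {to_nat v} = to_nat ` (A - {v})"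
  using to_nat_image_diff[of A "{v}"] by simp

lemma graph_iso_move_O_to_ugraph:
  "graph_iso (move_O H v n p) (move_O (to_ugraph H) (to_nat v) n (p \<circ> from_nat))"
proof (rule graph_iso_injI[where \<Phi> = "map_prod to_nat id" and \<Psi> = "map_prod to_nat id"])
  show "inj (map_prod to_nat (id::nat \<Rightarrow> nat))" by (rule prod.inj_map) auto
  then show "inj (map_prod to_nat (id::nat \<Rightarrow> nat))" .
  show "map_prod to_nat id ` verts (move_O H v n p) = verts (move_O (to_ugraph H) (to_nat v) n (p \<circ> from_nat))"
    by (simp add: move_O_def Collect_Pair_less image_Un image_image to_nat_image_diff_singleton)
  show "map_prod to_nat id ` edges (move_O H v n p) = edges (move_O (to_ugraph H) (to_nat v) n (p \<circ> from_nat))"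
    by (auto simp: move_O_def image_iff) force+
qed (auto simp: move_O_def)

lemma graph_iso_move_I_to_ugraph:
  "graph_iso (move_I H v n p) (move_I (to_ugraph H) (to_nat v) n (p \<circ> from_nat))"
proof (rule graph_iso_injI[where \<Phi> = "map_prod to_nat id" and \<Psi> = "map_prod to_nat id"])
  show "inj (map_prod to_nat (id::nat \<Rightarrow> nat))" by (rule prod.inj_map) auto
  then show "inj (map_prod to_nat (id::nat \<Rightarrow> nat))" .
  show "map_prod to_nat id ` verts (move_I H v n p) = verts (move_I (to_ugraph H) (to_nat v) n (p \<circ> from_nat))"
    by (simp add: move_I_def Collect_Pair_less image_Un image_image to_nat_image_diff_singleton)
  show "map_prod to_nat id ` edges (move_I H v n p) = edges (move_I (to_ugraph H) (to_nat v) n (p \<circ> from_nat))"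
    by (auto simp: move_I_def image_iff) force+
qed (auto simp: move_I_def)

lemma graph_iso_move_R_to_ugraph:
  "graph_iso (move_R H u f v) (move_R (to_ugraph H) (to_nat u) (to_nat f) (to_nat v))"
proof (rule graph_iso_injI[where \<Phi> = to_nat and \<Psi> = "map_sum to_nat to_nat"])
  show "inj (map_sum to_nat to_nat)" by (rule sum.inj_map) auto
  show "to_nat ` verts (move_R H u f v) = verts (move_R (to_ugraph H) (to_nat u) (to_nat f) (to_nat v))"
    by (auto simp: move_R_def)
  show "map_sum to_nat to_nat ` edges (move_R H u f v) = edges (move_R (to_ugraph H) (to_nat u) (to_nat f) (to_nat v))"
    by (simp add: move_R_def image_Un image_image receives_to_ugraph)
      (simp add: to_nat_image_diff_singleton to_nat_image_diff[symmetric] image_image)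
qed (auto simp: move_R_def)

lemma wf_graph_move_O:
  assumes "wf_graph G" "move_O_ok G v n p"
  shows "wf_graph (move_O G v n p)"
proof -
  have "rng (move_O G v n p) x \<in> verts (move_O G v n p) \<and> src (move_O G v n p) x \<in> verts (move_O G v n p)"
    if x_edge: "x \<in> edges (move_O G v n p)" for x
  proof -
    obtain e k where x: "x = (e, k)" "e \<in> edges G" "rng G e \<noteq> v \<and> k = 0 \<or> rng G e = v \<and> k < n"
      using x_edge by (auto simp: move_O_def)
    have "rng G e \<in> verts G" "src G e \<in> verts G" using assms(1) x(2) unfolding wf_graph_def by auto
    moreover have "src G e = v \<Longrightarrow> p e < n"
      using assms(2) x(2) unfolding move_O_ok_def is_partition_def emits_def by auto
    ultimately show ?thesis using x by (auto simp: move_O_def)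
  qed
  moreover have "finite (verts (move_O G v n p))"
    using assms(1) by (simp add: move_O_def Collect_Pair_less wf_graph_def)
  ultimately show ?thesis unfolding wf_graph_def by blast
qed

lemma wf_graph_move_I:
  assumes "wf_graph G" "move_I_ok G v n p"
  shows "wf_graph (move_I G v n p)"
proof -
  have "rng (move_I G v n p) x \<in> verts (move_I G v n p) \<and> src (move_I G v n p) x \<in> verts (move_I G v n p)"
    if x_edge: "x \<in> edges (move_I G v n p)" for x
  proof -
    obtain e k where x: "x = (e, k)" "e \<in> edges G" "src G e \<noteq> v \<and> k = 0 \<or> src G e = v \<and> k < n"
      using x_edge by (auto simp: move_I_def)
    have "rng G e \<in> verts G" "src G e \<in> verts G" using assms(1) x(2) unfolding wf_graph_def by auto
    moreover have "rng G e = v \<Longrightarrow> p e < n"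
      using assms(2) x(2) unfolding move_I_ok_def is_partition_def receives_def by auto
    ultimately show ?thesis using x by (auto simp: move_I_def)
  qed
  moreover have "finite (verts (move_I G v n p))"
    using assms(1) by (simp add: move_I_def Collect_Pair_less wf_graph_def)
  ultimately show ?thesis unfolding wf_graph_def by blast
qed

lemma wf_graph_move_R:
  assumes wf: "wf_graph G" and ok: "move_R_ok G u f v"
  shows "wf_graph (move_R G u f v)"
proof -
  have f: "f \<in> edges G" "src G f = u" "rng G f \<noteq> u" "rng G f \<in> verts G"
    using assms unfolding move_R_ok_def emits_def wf_graph_def by auto
  have "rng (move_R G u f v) x \<in> verts (move_R G u f v) \<and> src (move_R G u f v) x \<in> verts (move_R G u f v)"
    if x: "x \<in> edges (move_R G u f v)" for x
  proof (cases x)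
    case (Inl e)
    then have e: "e \<in> edges G" "e \<noteq> f" "rng G e \<noteq> u" using x by (auto simp: move_R_def receives_def)
    then have "src G e \<noteq> u" using ok unfolding move_R_ok_def emits_def by auto
    then show ?thesis using e Inl wf unfolding wf_graph_def by (auto simp: move_R_def)
  next
    case (Inr e)
    then have e: "e \<in> receives G u" using x by (auto simp: move_R_def)
    then have "src G e = v" using ok unfolding move_R_ok_def by auto
    moreover have "v \<noteq> u"
    proof
      assume "v = u"
      then have "e \<in> emits G u" using e \<open>src G e = v\<close> by (auto simp: emits_def receives_def)
      then have "e = f" using ok unfolding move_R_ok_def by auto
      then show False using e f by (auto simp: receives_def)
    qed
    ultimately show ?thesis using Inr f ok unfolding move_R_ok_def by (auto simp: move_R_def)
  qed
  moreover have "finite (verts (move_R G u f v))"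
    using wf by (simp add: move_R_def wf_graph_def)
  ultimately show ?thesis unfolding wf_graph_def by blast
qed

lemma move_step_to_ugraph_O:
  assumes "wf_graph H" "wf_graph K" "move_O_ok H v k p" "graph_iso (move_O H v k p) K"
  shows "move_step (to_ugraph H) (to_ugraph K)"
proof -
  have "graph_iso (move_O (to_ugraph H) (to_nat v) k (p \<circ> from_nat)) (move_O H v k p)"
    using graph_iso_sym[OF graph_iso_move_O_to_ugraph wf_graph_move_O[OF assms(1,3)]] .
  then have "graph_iso (move_O (to_ugraph H) (to_nat v) k (p \<circ> from_nat)) (to_ugraph K)"
    using graph_iso_trans[OF graph_iso_trans[OF _ assms(4)] graph_iso_to_ugraph] by blast
  then show ?thesis
    unfolding move_step_def
    using move_O_ok_to_ugraph[OF assms(3)] wf_graph_to_ugraph[OF assms(1)] wf_graph_to_ugraph[OF assms(2)]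
    by blast
qed

lemma move_step_to_ugraph_I:
  assumes "wf_graph H" "wf_graph K" "move_I_ok H v k p" "graph_iso (move_I H v k p) K"
  shows "move_step (to_ugraph H) (to_ugraph K)"
proof -
  have "graph_iso (move_I (to_ugraph H) (to_nat v) k (p \<circ> from_nat)) (move_I H v k p)"
    using graph_iso_sym[OF graph_iso_move_I_to_ugraph wf_graph_move_I[OF assms(1,3)]] .
  then have "graph_iso (move_I (to_ugraph H) (to_nat v) k (p \<circ> from_nat)) (to_ugraph K)"
    using graph_iso_trans[OF graph_iso_trans[OF _ assms(4)] graph_iso_to_ugraph] by blast
  then show ?thesis
    unfolding move_step_def
    using move_I_ok_to_ugraph[OF assms(3)] wf_graph_to_ugraph[OF assms(1)] wf_graph_to_ugraph[OF assms(2)]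
    by blast
qed

lemma move_step_to_ugraph_R:
  assumes "wf_graph H" "wf_graph K" "move_R_ok H u f v" "graph_iso (move_R H u f v) K"
  shows "move_step (to_ugraph H) (to_ugraph K)"
proof -
  have "graph_iso (move_R (to_ugraph H) (to_nat u) (to_nat f) (to_nat v)) (move_R H u f v)"
    using graph_iso_sym[OF graph_iso_move_R_to_ugraph wf_graph_move_R[OF assms(1,3)]] .
  then have "graph_iso (move_R (to_ugraph H) (to_nat u) (to_nat f) (to_nat v)) (to_ugraph K)"
    using graph_iso_trans[OF graph_iso_trans[OF _ assms(4)] graph_iso_to_ugraph] by blast
  then show ?thesis
    unfolding move_step_def
    using move_R_ok_to_ugraph[OF assms(3)] wf_graph_to_ugraph[OF assms(1)] wf_graph_to_ugraph[OF assms(2)]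
    by blast
qed

lemma graph_iso_move_O_trivial:
  assumes "v \<in> verts G" "\<not> is_sink G v"
  shows "move_O_ok G v 1 (\<lambda>_. 0)" "graph_iso (move_O G v 1 (\<lambda>_. 0)) G"
proof -
  show "move_O_ok G v 1 (\<lambda>_. 0)"
    using assms unfolding move_O_ok_def is_partition_def is_sink_def by auto
  have V: "verts (move_O G v 1 (\<lambda>_. 0)) = (\<lambda>w. (w, 0)) ` verts G"
    using assms(1) by (auto simp: move_O_def)
  have E: "edges (move_O G v 1 (\<lambda>_. 0)) = (\<lambda>e. (e, 0)) ` edges G"
    by (auto simp: move_O_def)
  have fst: "bij_betw fst ((\<lambda>x. (x, 0::nat)) ` S) S" for S :: "'x set"
    by (auto simp: bij_betw_def inj_on_def image_image)
  show "graph_iso (move_O G v 1 (\<lambda>_. 0)) G"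
    unfolding graph_iso_def V E by (rule exI[of _ fst], rule exI[of _ fst]) (auto simp: fst move_O_def)
qed

text \<open>Move equivalence is generated by the moves alone, so an isomorphism has to be realised as the
  trivial out-splitting; this needs a vertex that is not a sink, i.e.\ at least one edge.\<close>

lemma move_step_if_graph_iso:
  assumes "wf_graph G" "wf_graph E" "graph_iso G E" "e \<in> edges G"
  shows "move_step G E"
proof -
  have "src G e \<in> verts G" "\<not> is_sink G (src G e)"
    using assms(1,4) unfolding wf_graph_def is_sink_def emits_def by auto
  from graph_iso_move_O_trivial[OF this]
  have "move_O_ok G (src G e) 1 (\<lambda>_. 0)" "graph_iso (move_O G (src G e) 1 (\<lambda>_. 0)) E"
    using graph_iso_trans[OF _ assms(3)] by blast+
  then show ?thesis using assms(1,2) unfolding move_step_def by blast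
qed

lemma move_equiv_if_move_step: "move_step G E \<Longrightarrow> move_equiv G E"
  unfolding move_equiv_def by (rule r_into_rtranclp) simp

lemma move_equiv_trans: "move_equiv G E \<Longrightarrow> move_equiv E K \<Longrightarrow> move_equiv G K"
  unfolding move_equiv_def by (rule rtranclp_trans)

section \<open>Move equivalence of matrices of different sizes\<close>

definition matrices_move_equiv ::
    "nat \<Rightarrow> (nat \<Rightarrow> nat \<Rightarrow> enat) \<Rightarrow> nat \<Rightarrow> (nat \<Rightarrow> nat \<Rightarrow> enat) \<Rightarrow> bool" where
  "matrices_move_equiv n A m B \<longleftrightarrow> (\<exists>G E. wf_graph G \<and> wf_graph E \<and>
      graph_iso (matrix_graph n A) G \<and> graph_iso (matrix_graph m B) E \<and> move_equiv G E)"

lemma mat_move_equiv_iff: "mat_move_equiv n A B \<longleftrightarrow> matrices_move_equiv n A n B"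
  unfolding mat_move_equiv_def matrices_move_equiv_def ..

lemma wf_matrix_graph: "wf_graph (matrix_graph n A)"
  by (auto simp: wf_graph_def matrix_graph_def)

lemma verts_matrix_graph [simp]: "verts (matrix_graph n A) = {..<n}"
  by (simp add: matrix_graph_def)

lemma edges_matrix_graph_iff: "(x, y, c) \<in> edges (matrix_graph n A) \<longleftrightarrow> x < n \<and> y < n \<and> enat c < A x y"
  by (simp add: matrix_graph_def)

lemma src_rng_matrix_graph [simp]:
  "src (matrix_graph n A) (x, y, c) = x" "rng (matrix_graph n A) (x, y, c) = y"
  by (simp_all add: matrix_graph_def)

lemma matrix_graph_edge_count:
  assumes "a < n" "b < n"
  shows "ecard {e\<in>edges (matrix_graph n A). src (matrix_graph n A) e = a \<and> rng (matrix_graph n A) e = b} = A a b"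
proof -
  have "{e\<in>edges (matrix_graph n A). src (matrix_graph n A) e = a \<and> rng (matrix_graph n A) e = b}
      = (\<lambda>c. (a, b, c)) ` {c. enat c < A a b}"
    using assms by (auto simp: matrix_graph_def)
  then show ?thesis by (simp add: ecard_inj_image_less_enat inj_on_def)
qed

lemma matrices_move_equiv_cong:
  assumes "matrices_move_equiv n A m B" "\<And>a b. a < m \<Longrightarrow> b < m \<Longrightarrow> B a b = C a b"
  shows "matrices_move_equiv n A m C"
proof -
  have "matrix_graph m B = matrix_graph m C"
    using assms(2) unfolding matrix_graph_def by auto
  then show ?thesis using assms(1) unfolding matrices_move_equiv_def by simp
qed

lemma matrices_move_equiv_if_move_step:
  "move_step (to_ugraph (matrix_graph n A)) (to_ugraph (matrix_graph m B)) \<Longrightarrow> matrices_move_equiv n A m B"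
  unfolding matrices_move_equiv_def
  using wf_graph_to_ugraph[OF wf_matrix_graph] graph_iso_to_ugraph move_equiv_if_move_step by blast

lemma matrices_move_equiv_move_O:
  "move_O_ok (matrix_graph n A) v k p \<Longrightarrow> graph_iso (move_O (matrix_graph n A) v k p) (matrix_graph m B)
    \<Longrightarrow> matrices_move_equiv n A m B"
  by (intro matrices_move_equiv_if_move_step move_step_to_ugraph_O wf_matrix_graph)

lemma matrices_move_equiv_move_I:
  "move_I_ok (matrix_graph n A) v k p \<Longrightarrow> graph_iso (move_I (matrix_graph n A) v k p) (matrix_graph m B)
    \<Longrightarrow> matrices_move_equiv n A m B"
  by (intro matrices_move_equiv_if_move_step move_step_to_ugraph_I wf_matrix_graph)

lemma matrices_move_equiv_move_R:
  "move_R_ok (matrix_graph n A) u f v \<Longrightarrow> graph_iso (move_R (matrix_graph n A) u f v) (matrix_graph m B)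
    \<Longrightarrow> matrices_move_equiv n A m B"
  by (intro matrices_move_equiv_if_move_step move_step_to_ugraph_R wf_matrix_graph)

text \<open>The nonzero entry of B supplies the edge needed to realise the isomorphism between the two
  graphs representing B as a move.\<close>

lemma matrices_move_equiv_trans:
  assumes "matrices_move_equiv n A m B" "matrices_move_equiv m B k C"
    and "a < m" "b < m" "B a b \<noteq> 0"
  shows "matrices_move_equiv n A k C"
proof -
  obtain G E where AB: "wf_graph G" "wf_graph E" "graph_iso (matrix_graph n A) G"
      "graph_iso (matrix_graph m B) E" "move_equiv G E"
    using assms(1) unfolding matrices_move_equiv_def by blast
  obtain G' E' where BC: "wf_graph G'" "wf_graph E'" "graph_iso (matrix_graph m B) G'"
      "graph_iso (matrix_graph k C) E'" "move_equiv G' E'"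
    using assms(2) unfolding matrices_move_equiv_def by blast
  have iso: "graph_iso E G'" using graph_iso_trans[OF graph_iso_sym[OF AB(4) wf_matrix_graph] BC(3)] .
  have "(a, b, 0) \<in> edges (matrix_graph m B)"
    using assms(3-5) by (simp add: edges_matrix_graph_iff zero_enat_def[symmetric] not_gr_zero)
  then obtain e where "e \<in> edges E"
    using AB(4) unfolding graph_iso_def bij_betw_def by blast
  then have "move_equiv E G'" using move_step_if_graph_iso[OF AB(2) BC(1) iso] move_equiv_if_move_step by blast
  then have "move_equiv G E'" using AB(5) BC(5) move_equiv_trans by blast
  then show ?thesis unfolding matrices_move_equiv_def using AB BC by blast
qed

section \<open>Splitting and collapsing vertices of matrix graphs\<close>

definition rename_copy :: "'v \<Rightarrow> nat \<Rightarrow> 'v \<Rightarrow> 'v \<times> nat \<Rightarrow> 'v" where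
  "rename_copy v c w x = (if x = (v, c) then w else fst x)"

lemma bij_betw_rename_copy:
  assumes "v < n" "c < 2"
  shows "bij_betw (rename_copy v c n) ((\<lambda>w. (w, 0)) ` ({..<n} - {v}) \<union> {(v, m) |m. m < 2}) {..<Suc n}"
  unfolding bij_betw_def
proof
  show "inj_on (rename_copy v c n) ((\<lambda>w. (w, 0)) ` ({..<n} - {v}) \<union> {(v, m) |m. m < 2})"
    using assms unfolding inj_on_def rename_copy_def by auto
  have "b \<in> rename_copy v c n ` ((\<lambda>w. (w, 0)) ` ({..<n} - {v}) \<union> {(v, m) |m. m < 2})"
    if "b < Suc n" for b
  proof -
    consider "b = n" | "b = v" | "b < n" "b \<noteq> v" using \<open>b < Suc n\<close> by force
    then show ?thesis
    proof cases
      case 1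
      then show ?thesis unfolding rename_copy_def using assms by (intro image_eqI[of _ _ "(v, c)"]) auto
    next
      case 2
      have "1 - c \<noteq> c" using assms(2) by arith
      then show ?thesis unfolding rename_copy_def using 2 assms by (intro image_eqI[of _ _ "(v, 1 - c)"]) auto
    next
      case 3
      then show ?thesis unfolding rename_copy_def by (intro image_eqI[of _ _ "(b, 0)"]) auto
    qed
  qed
  then show "rename_copy v c n ` ((\<lambda>w. (w, 0)) ` ({..<n} - {v}) \<union> {(v, m) |m. m < 2}) = {..<Suc n}"
    using assms unfolding rename_copy_def by fastforce
qed

definition split_off :: "'e \<Rightarrow> 'e \<Rightarrow> nat" where
  "split_off f e = (if e = f then 0 else 1)"

text \<open>The vertex n is the copy of j that emits only the edge to i; the other copy keeps the name j.\<close>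

definition out_split_mat ::
    "nat \<Rightarrow> (nat \<Rightarrow> nat \<Rightarrow> enat) \<Rightarrow> nat \<Rightarrow> nat \<Rightarrow> nat \<Rightarrow> nat \<Rightarrow> enat" where
  "out_split_mat n A i j a b = (if a = n then (if b = i then 1 else 0) else if b = n then A a j
      else if a = j \<and> b = i then A j i - 1 else A a b)"

lemma move_O_ok_split_off:
  assumes "i < n" "j < n" "i \<noteq> j" "A j i \<noteq> 0" "A j j \<noteq> 0"
  shows "move_O_ok (matrix_graph n A) j 2 (split_off (j, i, 0))"
proof -
  let ?part = "\<lambda>k. {e\<in>emits (matrix_graph n A) j. split_off (j, i, 0) e = k}"
  have emits: "emits (matrix_graph n A) j = {(x, y, c). x = j \<and> y < n \<and> enat c < A j y}"
    using assms by (auto simp: emits_def matrix_graph_def)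
  have part0: "?part 0 = {(j, i, 0)}" and part1: "(j, j, 0) \<in> ?part 1"
    using assms unfolding emits split_off_def by (auto simp: zero_enat_def[symmetric] not_gr_zero)
  show ?thesis
    unfolding move_O_ok_def is_partition_def is_sink_def
  proof (intro conjI allI impI)
    show "j \<in> verts (matrix_graph n A)" "emits (matrix_graph n A) j \<noteq> {}"
      using assms(2) part0 by auto
    show "\<forall>e\<in>emits (matrix_graph n A) j. split_off (j, i, 0) e < 2"
      by (simp add: split_off_def)
    fix k :: nat assume "k < 2"
    then show "?part k \<noteq> {}" using part0 part1 by (cases k) auto
  next
    fix k l :: nat assume "k < 2" "l < 2" "infinite (?part k) \<and> infinite (?part l)"
    then show "k = l" using part0 by (cases k; cases l) auto
  qed simp
qed

lemma edges_move_O_matrix_graph_iff: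
  "((x, y, c), m) \<in> edges (move_O (matrix_graph n A) v k p) \<longleftrightarrow>
    x < n \<and> y < n \<and> enat c < A x y \<and> (if y = v then m < k else m = 0)"
  by (auto simp: move_O_def matrix_graph_def)

lemma edges_between_move_O_split_off:
  fixes n i j :: nat and A :: "nat \<Rightarrow> nat \<Rightarrow> enat"
  defines "G \<equiv> move_O (matrix_graph n A) j 2 (split_off (j, i, 0))"
  assumes "j < n"
  shows "{e\<in>edges G. rename_copy j 0 n (src G e) = a \<and> rename_copy j 0 n (rng G e) = b} =
    {((x, y, c), m). x < n \<and> y < n \<and> enat c < A x y \<and> (if y = j then m < 2 else m = 0) \<and>
       (if (x, y, c) = (j, i, 0) then n else x) = a \<and> (if y = j then (if m = 0 then n else j) else y) = b}"
proof (rule set_eqI)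
  fix e :: "(nat \<times> nat \<times> nat) \<times> nat"
  obtain x y c m where e: "e = ((x, y, c), m)" by (metis prod.exhaust)
  have "rename_copy j 0 n (src G ((x, y, c), m)) = (if (x, y, c) = (j, i, 0) then n else x)"
    "rename_copy j 0 n (rng G ((x, y, c), m)) = (if y = j then (if m = 0 then n else j) else y)"
    unfolding G_def move_O_def rename_copy_def split_off_def by (auto simp: matrix_graph_def)
  moreover have "((x, y, c), m) \<in> edges G \<longleftrightarrow> x < n \<and> y < n \<and> enat c < A x y \<and> (if y = j then m < 2 else m = 0)"
    unfolding G_def by (rule edges_move_O_matrix_graph_iff)
  ultimately show "e \<in> {e\<in>edges G. rename_copy j 0 n (src G e) = a \<and> rename_copy j 0 n (rng G e) = b} \<longleftrightarrow>
      e \<in> {((x, y, c), m). x < n \<and> y < n \<and> enat c < A x y \<and> (if y = j then m < 2 else m = 0) \<and>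
       (if (x, y, c) = (j, i, 0) then n else x) = a \<and> (if y = j then (if m = 0 then n else j) else y) = b}"
    unfolding e by simp
qed

lemma edge_counts_move_O_split_off:
  fixes n i j :: nat and A :: "nat \<Rightarrow> nat \<Rightarrow> enat"
  defines "G \<equiv> move_O (matrix_graph n A) j 2 (split_off (j, i, 0))"
  assumes "i < n" "j < n" "i \<noteq> j" "A j i \<noteq> 0" "a < Suc n" "b < Suc n"
  shows "ecard {e\<in>edges G. rename_copy j 0 n (src G e) = a \<and> rename_copy j 0 n (rng G e) = b} =
    out_split_mat n A i j a b"
proof -
  let ?T = "{((x, y, c), m::nat). x < n \<and> y < n \<and> enat c < A x y \<and> (if y = j then m < 2 else m = 0) \<and>
       (if (x, y, c) = (j, i, 0) then n else x) = a \<and> (if y = j then (if m = 0 then n else j) else y) = b}"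
  have Aji: "enat 0 < A j i" using assms by (simp add: zero_enat_def[symmetric] not_gr_zero)
  consider "a = n" "b = i" | "a = n" "b \<noteq> i" | "a < n" "b = n" | "a < n" "b = j"
    | "a = j" "b = i" | "a < n" "b < n" "b \<noteq> j" "\<not> (a = j \<and> b = i)"
    using assms by force
  then have "ecard ?T = out_split_mat n A i j a b"
  proof cases
    case 1
    then have T: "?T = {((j, i, 0), 0)}" using assms Aji by (auto split: if_splits)
    show ?thesis unfolding T using 1 by (simp add: out_split_mat_def)
  next
    case 2
    then have T: "?T = {}" using assms by (auto split: if_splits)
    show ?thesis unfolding T using 2 by (simp add: out_split_mat_def)
  next
    case 3
    then have T: "?T = (\<lambda>c. ((a, j, c), 0)) ` {c. enat c < A a j}" using assms by (auto split: if_splits)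
    show ?thesis unfolding T using 3 by (simp add: out_split_mat_def ecard_inj_image_less_enat inj_on_def)
  next
    case 4
    then have T: "?T = (\<lambda>c. ((a, j, c), 1)) ` {c. enat c < A a j}" using assms by (auto split: if_splits)
    show ?thesis unfolding T using 4 assms by (simp add: out_split_mat_def ecard_inj_image_less_enat inj_on_def)
  next
    case 5
    then have T: "?T = (\<lambda>c. ((j, i, c), 0)) ` {c. 0 < c \<and> enat c < A j i}" using assms by (auto split: if_splits)
    show ?thesis unfolding T using 5 assms by (simp add: out_split_mat_def ecard_inj_image_pos_less_enat inj_on_def)
  next
    case 6
    then have T: "?T = (\<lambda>c. ((a, b, c), 0)) ` {c. enat c < A a b}" using assms by (auto split: if_splits)
    show ?thesis unfolding T using 6 assms by (auto simp: out_split_mat_def ecard_inj_image_less_enat inj_on_def)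
  qed
  then show ?thesis unfolding G_def edges_between_move_O_split_off[OF assms(3)] .
qed

lemma matrices_move_equiv_out_split_mat:
  assumes "i < n" "j < n" "i \<noteq> j" "A j i \<noteq> 0" "A j j \<noteq> 0"
  shows "matrices_move_equiv n A (Suc n) (out_split_mat n A i j)"
proof -
  let ?G = "move_O (matrix_graph n A) j 2 (split_off (j, i, 0))"
  have ok: "move_O_ok (matrix_graph n A) j 2 (split_off (j, i, 0))"
    using move_O_ok_split_off[of i n j A] assms by blast
  have "verts ?G = (\<lambda>w. (w, 0)) ` ({..<n} - {j}) \<union> {(j, m) |m. m < 2}"
    by (simp add: move_O_def)
  then have "bij_betw (rename_copy j 0 n) (verts ?G) (verts (matrix_graph (Suc n) (out_split_mat n A i j)))"
    using bij_betw_rename_copy[of j n 0] assms by simp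
  then have "graph_iso ?G (matrix_graph (Suc n) (out_split_mat n A i j))"
    using graph_iso_by_edge_counts[OF wf_graph_move_O[OF wf_matrix_graph ok] wf_matrix_graph]
      edge_counts_move_O_split_off assms matrix_graph_edge_count by simp
  then show ?thesis using matrices_move_equiv_move_O[OF ok] by blast
qed

lemma move_R_ok_last_vertex:
  fixes B :: "nat \<Rightarrow> nat \<Rightarrow> enat"
  assumes "t < K" "v < K" and row: "\<forall>b<Suc K. B K b = (if b = t then 1 else 0)"
    and col: "\<forall>x<K. x \<noteq> v \<longrightarrow> B x K = 0"
  shows "receives (matrix_graph (Suc K) B) K = (\<lambda>c. (v, K, c)) ` {c. enat c < B v K}"
    and "move_R_ok (matrix_graph (Suc K) B) K (K, t, 0) v"
proof -
  have BK: "B K y = (if y = t then 1 else 0)" if "y < Suc K" for y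
    using row that by simp
  have "enat c < B x K \<and> x < Suc K \<longleftrightarrow> x = v \<and> enat c < B v K" for x c
    using col BK[of K] assms(1,2) by (cases "x = K"; cases "x = v") (auto simp: less_Suc_eq)
  then show rec: "receives (matrix_graph (Suc K) B) K = (\<lambda>c. (v, K, c)) ` {c. enat c < B v K}"
    by (auto simp: receives_def matrix_graph_def)
  have "enat c < B K y \<and> y < Suc K \<longleftrightarrow> y = t \<and> c = 0" for y c
    using BK assms(1) by (cases "y = t") (auto simp: one_enat_def zero_enat_def)
  then have "emits (matrix_graph (Suc K) B) K = {(K, t, 0)}"
    by (auto simp: emits_def matrix_graph_def)
  then show "move_R_ok (matrix_graph (Suc K) B) K (K, t, 0) v"
    unfolding move_R_ok_def is_regular_def rec using assms(1,2) by (auto simp: matrix_graph_def)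
qed

lemma matrices_move_equiv_collapse_last:
  fixes B :: "nat \<Rightarrow> nat \<Rightarrow> enat"
  assumes "t < K" "v < K" "\<forall>b<Suc K. B K b = (if b = t then 1 else 0)" "\<forall>x<K. x \<noteq> v \<longrightarrow> B x K = 0"
  shows "matrices_move_equiv (Suc K) B K (\<lambda>a b. B a b + (if a = v \<and> b = t then B v K else 0))"
    (is "matrices_move_equiv _ _ _ ?C")
proof -
  let ?G = "move_R (matrix_graph (Suc K) B) K (K, t, 0) v"
  note rec = move_R_ok_last_vertex(1)[OF assms] and ok = move_R_ok_last_vertex(2)[OF assms]
  have edges_between: "{e\<in>edges ?G. src ?G e = a \<and> rng ?G e = b} =
      (\<lambda>c. Inl (a, b, c)) ` {c. enat c < B a b} \<union>
      (if a = v \<and> b = t then (\<lambda>c. Inr (v, K, c)) ` {c. enat c < B v K} else {})"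
    if "a < K" "b < K" for a b
  proof (rule set_eqI)
    fix x :: "(nat \<times> nat \<times> nat) + (nat \<times> nat \<times> nat)"
    obtain y c d where "x = Inl (y, c, d) \<or> x = Inr (y, c, d)" by (metis prod.exhaust sum.exhaust)
    then show "x \<in> {e\<in>edges ?G. src ?G e = a \<and> rng ?G e = b} \<longleftrightarrow> x \<in> (\<lambda>c. Inl (a, b, c)) ` {c. enat c < B a b} \<union>
      (if a = v \<and> b = t then (\<lambda>c. Inr (v, K, c)) ` {c. enat c < B v K} else {})"
      using that by (auto simp: move_R_def rec edges_matrix_graph_iff)
  qed
  have "ecard {e\<in>edges ?G. src ?G e = a \<and> rng ?G e = b} = ?C a b" if "a < K" "b < K" for a b
  proof (cases "a = v \<and> b = t")
    case True
    have "(\<lambda>c. Inl (a, b, c)) ` X \<inter> (\<lambda>c. Inr (v, K, c)) ` Y = {}" for X Y :: "nat set" by auto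
    then show ?thesis unfolding edges_between[OF that] using True
      by (simp add: ecard_Un_disjoint ecard_inj_image_less_enat inj_on_def)
  next
    case False
    then show ?thesis unfolding edges_between[OF that] using False by (auto simp: ecard_inj_image_less_enat inj_on_def)
  qed
  moreover have "verts ?G = {..<K}" by (auto simp: move_R_def)
  ultimately have "graph_iso ?G (matrix_graph K ?C)"
    using graph_iso_by_edge_counts[OF wf_graph_move_R[OF wf_matrix_graph ok] wf_matrix_graph, of id]
      matrix_graph_edge_count by simp
  then show ?thesis using matrices_move_equiv_move_R[OF ok] by blast
qed

definition split_off_source :: "'v \<Rightarrow> 'v \<times> 'e \<Rightarrow> nat" where
  "split_off_source x e = (if fst e = x then 1 else 0)"

text \<open>Vertex N is split into N, receiving the edges from all predecessors but x, and Suc N,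
  receiving those from x; both copies emit a single edge to i.\<close>

definition in_split_mat ::
    "nat \<Rightarrow> (nat \<Rightarrow> nat \<Rightarrow> enat) \<Rightarrow> nat \<Rightarrow> nat \<Rightarrow> nat \<Rightarrow> nat \<Rightarrow> enat" where
  "in_split_mat N B i x a b = (if N \<le> a then (if b = i then 1 else 0)
     else if b = Suc N then (if a = x then B a N else 0)
     else if b = N then (if a = x then 0 else B a N) else B a b)"

lemma edges_move_I_matrix_graph_iff:
  "((x, y, c), m) \<in> edges (move_I (matrix_graph n A) v k p) \<longleftrightarrow>
    x < n \<and> y < n \<and> enat c < A x y \<and> (if x = v then m < k else m = 0)"
  by (auto simp: move_I_def matrix_graph_def)

lemma last_row_unit_edge_iff:
  fixes B :: "nat \<Rightarrow> nat \<Rightarrow> enat"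
  assumes "i < N" "\<forall>b<Suc N. B N b = (if b = i then 1 else 0)"
  shows "enat c < B N y \<and> y < Suc N \<longleftrightarrow> y = i \<and> c = 0"
  using assms by (cases "y = i") (auto simp: one_enat_def zero_enat_def)

lemma move_I_ok_split_off_source:
  fixes B :: "nat \<Rightarrow> nat \<Rightarrow> enat"
  assumes "i < N" "\<forall>b<Suc N. B N b = (if b = i then 1 else 0)"
    and "x < N" "B x N \<noteq> 0" "y < N" "y \<noteq> x" "B y N \<noteq> 0"
  shows "move_I_ok (matrix_graph (Suc N) B) N 2 (split_off_source x)"
proof -
  let ?G = "matrix_graph (Suc N) B"
  have "emits ?G N = {(N, i, 0)}"
    using last_row_unit_edge_iff[where B = B, OF assms(1,2)] by (auto simp: emits_def matrix_graph_def)
  moreover have "(x, N, 0) \<in> receives ?G N" "(y, N, 0) \<in> receives ?G N"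
    using assms(3-7) by (auto simp: receives_def matrix_graph_def zero_enat_def[symmetric] not_gr_zero)
  ultimately show ?thesis
    unfolding move_I_ok_def is_partition_def is_regular_def is_source_def
  proof (intro conjI allI impI)
    fix k :: nat assume "k < 2"
    then show "{e\<in>receives ?G N. split_off_source x e = k} \<noteq> {}"
      using \<open>(x, N, 0) \<in> receives ?G N\<close> \<open>(y, N, 0) \<in> receives ?G N\<close> \<open>y \<noteq> x\<close>
      by (cases k) (auto simp: split_off_source_def)
  qed (auto simp: split_off_source_def)
qed

lemma edges_between_move_I_split_off_source:
  fixes N x :: nat and B :: "nat \<Rightarrow> nat \<Rightarrow> enat"
  defines "G \<equiv> move_I (matrix_graph (Suc N) B) N 2 (split_off_source x)"
  shows "{e\<in>edges G. rename_copy N 1 (Suc N) (src G e) = a \<and> rename_copy N 1 (Suc N) (rng G e) = b} =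
    {((x', y, c), m). x' < Suc N \<and> y < Suc N \<and> enat c < B x' y \<and> (if x' = N then m < 2 else m = 0) \<and>
       (if x' = N then N + m else x') = a \<and> (if y = N then (if x' = x then Suc N else N) else y) = b}"
proof (rule set_eqI)
  fix e :: "(nat \<times> nat \<times> nat) \<times> nat"
  obtain x' y c m where e: "e = ((x', y, c), m)" by (metis prod.exhaust)
  have "(if x' = N then m < 2 else m = 0) \<Longrightarrow>
      rename_copy N 1 (Suc N) (src G ((x', y, c), m)) = (if x' = N then N + m else x')"
    "rename_copy N 1 (Suc N) (rng G ((x', y, c), m)) = (if y = N then (if x' = x then Suc N else N) else y)"
    unfolding G_def move_I_def rename_copy_def split_off_source_def
    by (auto simp: matrix_graph_def split: if_splits)
  moreover have "((x', y, c), m) \<in> edges G \<longleftrightarrow>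
      x' < Suc N \<and> y < Suc N \<and> enat c < B x' y \<and> (if x' = N then m < 2 else m = 0)"
    unfolding G_def by (rule edges_move_I_matrix_graph_iff)
  ultimately show "e \<in> {e\<in>edges G. rename_copy N 1 (Suc N) (src G e) = a \<and> rename_copy N 1 (Suc N) (rng G e) = b} \<longleftrightarrow>
      e \<in> {((x', y, c), m). x' < Suc N \<and> y < Suc N \<and> enat c < B x' y \<and> (if x' = N then m < 2 else m = 0) \<and>
       (if x' = N then N + m else x') = a \<and> (if y = N then (if x' = x then Suc N else N) else y) = b}"
    unfolding e by auto
qed

lemma edge_counts_move_I_split_off_source:
  fixes N x :: nat and B :: "nat \<Rightarrow> nat \<Rightarrow> enat"
  defines "G \<equiv> move_I (matrix_graph (Suc N) B) N 2 (split_off_source x)"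
  assumes "i < N" and row: "\<forall>b<Suc N. B N b = (if b = i then 1 else 0)"
    and "x < N" "a < Suc (Suc N)" "b < Suc (Suc N)"
  shows "ecard {e\<in>edges G. rename_copy N 1 (Suc N) (src G e) = a \<and> rename_copy N 1 (Suc N) (rng G e) = b} =
    in_split_mat N B i x a b"
proof -
  let ?T = "{((x', y, c), m::nat). x' < Suc N \<and> y < Suc N \<and> enat c < B x' y \<and> (if x' = N then m < 2 else m = 0) \<and>
       (if x' = N then N + m else x') = a \<and> (if y = N then (if x' = x then Suc N else N) else y) = b}"
  note row_edge = last_row_unit_edge_iff[where B = B, OF assms(2) row]
  have BNN: "B N N = 0" using row assms(2) by auto
  consider "N \<le> a" "b = i" | "N \<le> a" "b \<noteq> i" | "a < N" "b = Suc N" "a = x"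
    | "a < N" "b = Suc N" "a \<noteq> x" | "a < N" "b = N" "a = x" | "a < N" "b = N" "a \<noteq> x" | "a < N" "b < N"
    using assms(6) by force
  then have "ecard ?T = in_split_mat N B i x a b"
  proof cases
    case 1
    then have T: "?T = {((N, i, 0), a - N)}" using assms row_edge BNN by (auto split: if_splits)
    show ?thesis unfolding T using 1 by (simp add: in_split_mat_def)
  next
    case 2
    then have T: "?T = {}" using assms row_edge BNN by (auto split: if_splits)
    show ?thesis unfolding T using 2 by (simp add: in_split_mat_def)
  next
    case 3
    then have T: "?T = (\<lambda>c. ((x, N, c), 0)) ` {c. enat c < B x N}" using assms row_edge BNN by (auto split: if_splits)
    show ?thesis unfolding T using 3 by (simp add: in_split_mat_def ecard_inj_image_less_enat inj_on_def)
  next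
    case 4
    then have T: "?T = {}" using assms row_edge BNN by (auto split: if_splits)
    show ?thesis unfolding T using 4 by (simp add: in_split_mat_def)
  next
    case 5
    then have T: "?T = {}" using assms row_edge BNN by (auto split: if_splits)
    show ?thesis unfolding T using 5 by (simp add: in_split_mat_def)
  next
    case 6
    then have T: "?T = (\<lambda>c. ((a, N, c), 0)) ` {c. enat c < B a N}" using assms row_edge BNN by (auto split: if_splits)
    show ?thesis unfolding T using 6 by (simp add: in_split_mat_def ecard_inj_image_less_enat inj_on_def)
  next
    case 7
    then have T: "?T = (\<lambda>c. ((a, b, c), 0)) ` {c. enat c < B a b}" using assms row_edge BNN by (auto split: if_splits)
    show ?thesis unfolding T using 7 by (simp add: in_split_mat_def ecard_inj_image_less_enat inj_on_def)
  qed
  then show ?thesis unfolding G_def edges_between_move_I_split_off_source .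
qed

lemma matrices_move_equiv_in_split_mat:
  fixes B :: "nat \<Rightarrow> nat \<Rightarrow> enat"
  assumes "i < N" "\<forall>b<Suc N. B N b = (if b = i then 1 else 0)"
    and "x < N" "B x N \<noteq> 0" "y < N" "y \<noteq> x" "B y N \<noteq> 0"
  shows "matrices_move_equiv (Suc N) B (Suc (Suc N)) (in_split_mat N B i x)"
proof -
  let ?G = "move_I (matrix_graph (Suc N) B) N 2 (split_off_source x)"
  have ok: "move_I_ok (matrix_graph (Suc N) B) N 2 (split_off_source x)"
    using move_I_ok_split_off_source[OF assms] .
  have "verts ?G = (\<lambda>w. (w, 0)) ` ({..<Suc N} - {N}) \<union> {(N, m) |m. m < 2}"
    by (simp add: move_I_def)
  then have "bij_betw (rename_copy N 1 (Suc N)) (verts ?G) (verts (matrix_graph (Suc (Suc N)) (in_split_mat N B i x)))"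
    using bij_betw_rename_copy[of N "Suc N" 1] by simp
  then have "graph_iso ?G (matrix_graph (Suc (Suc N)) (in_split_mat N B i x))"
    using graph_iso_by_edge_counts[OF wf_graph_move_I[OF wf_matrix_graph ok] wf_matrix_graph]
      edge_counts_move_I_split_off_source assms(1-3) matrix_graph_edge_count by simp
  then show ?thesis using matrices_move_equiv_move_I[OF ok] by blast
qed

section \<open>Adding column j to column i\<close>

lemma matrices_move_equiv_absorb_last:
  fixes B :: "nat \<Rightarrow> nat \<Rightarrow> enat"
  assumes i: "i < N" and "\<forall>b<Suc N. B N b = (if b = i then 1 else 0)" "\<exists>x<N. B x N \<noteq> 0"
  shows "matrices_move_equiv (Suc N) B N (\<lambda>a b. B a b + (if b = i then B a N else 0))"
  using assms(2,3)
proof (induction "card {x. x < N \<and> B x N \<noteq> 0}" arbitrary: B rule: less_induct)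
  case less
  let ?S = "{x. x < N \<and> B x N \<noteq> 0}"
  obtain x where x: "x \<in> ?S" using less.prems(2) by blast
  show ?case
  proof (cases "?S = {x}")
    case True
    then have others: "\<forall>y<N. y \<noteq> x \<longrightarrow> B y N = 0" by auto
    with x have "matrices_move_equiv (Suc N) B N (\<lambda>a b. B a b + (if a = x \<and> b = i then B x N else 0))"
      using matrices_move_equiv_collapse_last[where B = B, OF i _ less.prems(1)] by simp
    then show ?thesis by (rule matrices_move_equiv_cong) (use others in auto)
  next
    case False
    then obtain y where y: "y \<in> ?S" "y \<noteq> x" using x by blast
    let ?D = "in_split_mat N B i x"
    define B' where "B' = (\<lambda>a b. ?D a b + (if a = x \<and> b = i then ?D x (Suc N) else 0))"
    have "matrices_move_equiv (Suc N) B (Suc (Suc N)) ?D"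
      using matrices_move_equiv_in_split_mat[where B = B, OF i less.prems(1)] x y by blast
    moreover have "matrices_move_equiv (Suc (Suc N)) ?D (Suc N) B'"
      unfolding B'_def using matrices_move_equiv_collapse_last[of i "Suc N" x ?D] i x
      by (simp add: in_split_mat_def)
    ultimately have B_B': "matrices_move_equiv (Suc N) B (Suc N) B'"
      using matrices_move_equiv_trans[where a = N and b = i] i by (simp add: in_split_mat_def)
    have row': "\<forall>b<Suc N. B' N b = (if b = i then 1 else 0)"
      using x by (simp add: B'_def in_split_mat_def)
    have "{z. z < N \<and> B' z N \<noteq> 0} = ?S - {x}"
      using i by (auto simp: B'_def in_split_mat_def)
    moreover have "card (?S - {x}) < card ?S"
      using x by (intro card_Diff1_less) auto
    ultimately have "matrices_move_equiv (Suc N) B' N (\<lambda>a b. B' a b + (if b = i then B' a N else 0))"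
      using less.hyps[of B'] row' y by auto
    then have "matrices_move_equiv (Suc N) B' N (\<lambda>a b. B a b + (if b = i then B a N else 0))"
      by (rule matrices_move_equiv_cong) (use x in \<open>auto simp: B'_def in_split_mat_def add.commute\<close>)
    then show ?thesis
      using matrices_move_equiv_trans[OF B_B', where a = N and b = i] i row' by simp
  qed
qed

lemma col_op_eq_absorbed_out_split_mat:
  assumes "a < n" "b < n" "A j i \<noteq> 0"
  shows "out_split_mat n A i j a b + (if b = i then out_split_mat n A i j a n else 0) = col_op A i j a b"
  using assms enat_minus_one_add[OF assms(3)] by (auto simp: out_split_mat_def col_op_def)

lemma matrices_move_equiv_col_op:
  assumes "i < n" "j < n" "i \<noteq> j" "A j i \<noteq> 0" "A j j \<noteq> 0"
  shows "matrices_move_equiv n A n (col_op A i j)"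
proof -
  let ?B = "out_split_mat n A i j"
  have "matrices_move_equiv n A (Suc n) ?B"
    using matrices_move_equiv_out_split_mat[where A = A, OF assms] .
  moreover have "matrices_move_equiv (Suc n) ?B n (\<lambda>a b. ?B a b + (if b = i then ?B a n else 0))"
    using assms by (intro matrices_move_equiv_absorb_last) (auto simp: out_split_mat_def)
  ultimately have "matrices_move_equiv n A n (\<lambda>a b. ?B a b + (if b = i then ?B a n else 0))"
    using matrices_move_equiv_trans[where a = n and b = i] assms(1) by (simp add: out_split_mat_def)
  then show ?thesis
    by (rule matrices_move_equiv_cong) (use col_op_eq_absorbed_out_split_mat assms(4) in blast)
qed

lemma col_op_diag_nonzero: "i \<noteq> j \<Longrightarrow> A k k \<noteq> 0 \<Longrightarrow> col_op A i j k k \<noteq> 0"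
  by (auto simp: col_op_def)

lemma le_col_op: "A j j \<noteq> 0 \<Longrightarrow> A a b \<le> col_op A i j a b"
  by (simp add: col_op_def enat_le_add_minus_one)

lemma irreducible_mat_mono:
  assumes "\<And>a b. a < m \<Longrightarrow> b < m \<Longrightarrow> A a b \<le> A' a b" "irreducible_mat m A"
  shows "irreducible_mat m A'"
proof -
  let ?R = "\<lambda>A a b. \<exists>e\<in>edges (matrix_graph m A). src (matrix_graph m A) e = a \<and> rng (matrix_graph m A) e = b"
  have "?R A a b \<Longrightarrow> ?R A' a b" for a b
    using assms(1) by (auto simp: matrix_graph_def intro: order_less_le_trans)
  then have "(?R A)\<^sup>*\<^sup>* \<le> (?R A')\<^sup>*\<^sup>*" by (intro rtranclp_mono) blast
  then show ?thesis using assms(2) unfolding irreducible_mat_def strongly_connected_def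
    by (auto dest: predicate2D)
qed

theorem lemma7p2:
  fixes n i j :: nat and A :: "nat \<Rightarrow> nat \<Rightarrow> enat"
  assumes "\<forall>k<n. A k k \<noteq> 0"
    and "i < n" and "j < n" and "i \<noteq> j"
    and "A j i \<noteq> 0"
  shows "mat_move_equiv n A (col_op A i j) \<and>
         (\<forall>k<n. col_op A i j k k \<noteq> 0) \<and>
         (irreducible_mat n A \<longrightarrow> irreducible_mat n (col_op A i j)) \<and>
         (\<forall>m\<le>n. irreducible_mat m A \<longrightarrow> irreducible_mat m (col_op A i j))"
proof -
  have Ajj: "A j j \<noteq> 0" using assms(1,3) by blast
  have "irreducible_mat m A \<longrightarrow> irreducible_mat m (col_op A i j)" for m
    using irreducible_mat_mono le_col_op[where A = A and j = j, OF Ajj] by blast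
  then show ?thesis
    using matrices_move_equiv_col_op[where A = A, OF assms(2-5) Ajj] col_op_diag_nonzero[OF assms(4)] assms(1)
    by (simp add: mat_move_equiv_iff)
qed

end
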